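(* Let $0<x_{0}<x_{1}<\infty$, $g\in C^{1}[x_{0},x_{1}]$ with $g>0$ on $[x_{0},x_{1}]$, $w\in C[x_{0},x_{1}]$ with $w\ge0$ a.e., and $q\in L^{\infty}[x_{0},x_{1}]$ with $q\ge0$ a.e. On $H=L^{1}[x_{0},x_{1}]$ define $\mathcal{L}[p]=-(gp)'-wp$ with domain $\mathcal{D}(\mathcal{L})=\{\phi\in H:(g\phi)'\in H,\ (g\phi)(x_{0})=\int_{x_{0}}^{x_{1}}q(x)\phi(x)\,dx\}$. Define $$\xi(\lambda)=\int_{x_{0}}^{x_{1}}\frac{q(x)}{g(x)}\exp\left(-\int_{x_{0}}^{x}\frac{\lambda+w(s)}{g(s)}\,ds\right)dx-1,\qquad \lambda\in\mathbb{C}.$$ Then the spectrum of $\mathcal{L}$ equals its point spectrum, and for $\lambda\in\mathbb{C}$: $\lambda\in\sigma_{p}(\mathcal{L})=\sigma(\mathcal{L})$ if and only if $\xi(\lambda)=0$.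
   Context: $\sigma_p(\mathcal{L})$ denotes the set of eigenvalues of $\mathcal{L}$ (those $\lambda$ with $\mathcal{L}\phi=\lambda\phi$ for some nonzero $\phi\in\mathcal{D}(\mathcal{L})$). *)

theory Defs
  imports "HOL-Analysis.Analysis"
begin

text \<open>The Banach space H = L^1[x0,x1] of complex-valued functions, elements are
  represented by functions real => complex, identified up to equality a.e.
  with respect to Lebesgue measure on [x0,x1].\<close>

abbreviation Iv :: "real \<Rightarrow> real \<Rightarrow> real measure" where
  "Iv a b \<equiv> lebesgue_on {a..b}"

definition L1norm :: "real \<Rightarrow> real \<Rightarrow> (real \<Rightarrow> complex) \<Rightarrow> real" where
  "L1norm a b f = integral\<^sup>L (Iv a b) (\<lambda>x. cmod (f x))"

text \<open>Graph of the operator L[p] = -(g p)' - w p with domain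
  D(L) = { phi in H : (g phi)' in H, (g phi)(x0) = int q phi }.
  "(g phi)' in H" means: g phi agrees a.e. with an absolutely continuous function u,
  u(x) = u(x0) + int_{x0}^x h, whose derivative h is in L^1; (g phi)(x0) is u(x0).\<close>

definition L_graph ::
  "real \<Rightarrow> real \<Rightarrow> (real \<Rightarrow> real) \<Rightarrow> (real \<Rightarrow> real) \<Rightarrow> (real \<Rightarrow> real)
     \<Rightarrow> (real \<Rightarrow> complex) \<Rightarrow> (real \<Rightarrow> complex) \<Rightarrow> bool" where
  "L_graph x0 x1 g w q \<phi> \<psi> \<longleftrightarrow>
     integrable (Iv x0 x1) \<phi> \<and>
     (\<exists>u h. integrable (Iv x0 x1) h \<and>
        (\<forall>x\<in>{x0..x1}. u x = u x0 + integral\<^sup>L (Iv x0 x) h) \<and>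
        (AE x in Iv x0 x1. u x = of_real (g x) * \<phi> x) \<and>
        u x0 = integral\<^sup>L (Iv x0 x1) (\<lambda>x. of_real (q x) * \<phi> x) \<and>
        (AE x in Iv x0 x1. \<psi> x = - h x - of_real (w x) * \<phi> x))"

definition point_spectrum ::
  "real \<Rightarrow> real \<Rightarrow> (real \<Rightarrow> real) \<Rightarrow> (real \<Rightarrow> real) \<Rightarrow> (real \<Rightarrow> real) \<Rightarrow> complex set" where
  "point_spectrum x0 x1 g w q =
     {l. \<exists>\<phi>. L_graph x0 x1 g w q \<phi> (\<lambda>x. l * \<phi> x) \<and> \<not> (AE x in Iv x0 x1. \<phi> x = 0)}"

definition resolvent_set ::
  "real \<Rightarrow> real \<Rightarrow> (real \<Rightarrow> real) \<Rightarrow> (real \<Rightarrow> real) \<Rightarrow> (real \<Rightarrow> real) \<Rightarrow> complex set" where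
  "resolvent_set x0 x1 g w q =
     {l. (\<forall>f. integrable (Iv x0 x1) f \<longrightarrow>
            (\<exists>\<phi> \<psi>. L_graph x0 x1 g w q \<phi> \<psi> \<and>
                    (AE x in Iv x0 x1. l * \<phi> x - \<psi> x = f x))) \<and>
         (\<forall>\<phi> \<psi>. L_graph x0 x1 g w q \<phi> \<psi> \<and> (AE x in Iv x0 x1. l * \<phi> x - \<psi> x = 0)
                 \<longrightarrow> (AE x in Iv x0 x1. \<phi> x = 0)) \<and>
         (\<exists>C. \<forall>\<phi> \<psi>. L_graph x0 x1 g w q \<phi> \<psi> \<longrightarrow>
                 L1norm x0 x1 \<phi> \<le> C * L1norm x0 x1 (\<lambda>x. l * \<phi> x - \<psi> x))}"

definition spectrum_L ::
  "real \<Rightarrow> real \<Rightarrow> (real \<Rightarrow> real) \<Rightarrow> (real \<Rightarrow> real) \<Rightarrow> (real \<Rightarrow> real) \<Rightarrow> complex set" where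
  "spectrum_L x0 x1 g w q = - resolvent_set x0 x1 g w q"

definition xi ::
  "real \<Rightarrow> real \<Rightarrow> (real \<Rightarrow> real) \<Rightarrow> (real \<Rightarrow> real) \<Rightarrow> (real \<Rightarrow> real) \<Rightarrow> complex \<Rightarrow> complex" where
  "xi x0 x1 g w q l =
     integral\<^sup>L (Iv x0 x1)
       (\<lambda>x. of_real (q x / g x) *
            exp (- integral\<^sup>L (Iv x0 x) (\<lambda>s. (l + of_real (w s)) / of_real (g s)))) - 1"

end

theory Submission
  imports Defs
begin

text \<open>Writing u = g \<phi>, the equation l \<phi> - L \<phi> = f becomes the linear ODE
  u' = f - ((l + w) / g) u with the nonlocal boundary condition u x0 = \<integral> (q / g) u.
  Variation of constants solves the ODE uniquely for every initial value c, and since the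
  boundary functional of that solution is affine in c with slope \<xi>(l) + 1, the boundary
  condition reads c \<xi>(l) = -(boundary functional of the solution with c = 0).
  If \<xi>(l) = 0, the solution with f = 0 and c = 1 is an eigenfunction; if \<xi>(l) \<noteq> 0,
  c is determined by f, which gives existence, uniqueness and a bound for the resolvent,
  so l lies in the resolvent set.\<close>

section \<open>Lebesgue integrals on compact intervals\<close>

lemma borel_measurable_lebesgue_on_AE:
  fixes f g :: "'a::euclidean_space \<Rightarrow> 'b::euclidean_space"
  assumes S: "S \<in> sets lebesgue" and f: "f \<in> borel_measurable (lebesgue_on S)"
    and ae: "AE x in lebesgue_on S. f x = g x"
  shows "g \<in> borel_measurable (lebesgue_on S)"
proof -
  have "(\<lambda>x. if x \<in> S then f x else 0) \<in> borel_measurable lebesgue"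
    using f borel_measurable_if[OF S] by blast
  moreover have "AE x in lebesgue. (if x \<in> S then f x else 0) = (if x \<in> S then g x else 0)"
    using ae S by (auto simp: AE_restrict_space_iff elim!: eventually_mono)
  ultimately have "(\<lambda>x. if x \<in> S then g x else 0) \<in> borel_measurable lebesgue"
    by (rule borel_measurable_AE)
  then show ?thesis using borel_measurable_if[OF S] by blast
qed

lemma integrable_lebesgue_on_AE_eq:
  fixes f g :: "'a::euclidean_space \<Rightarrow> 'b::euclidean_space"
  assumes "S \<in> sets lebesgue" "integrable (lebesgue_on S) f" "AE x in lebesgue_on S. f x = g x"
  shows "integrable (lebesgue_on S) g"
  using integrable_cong_AE_imp[OF assms(2)
      borel_measurable_lebesgue_on_AE[OF assms(1) borel_measurable_integrable[OF assms(2)] assms(3)]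
      assms(3)] .

lemma integral_lebesgue_on_singleton [simp]:
  "integral\<^sup>L (lebesgue_on {a}) (f :: real \<Rightarrow> 'b::euclidean_space) = 0"
  by (rule integral_eq_zero_null_sets) simp

lemma integrable_mult_continuous:
  fixes f g :: "real \<Rightarrow> complex"
  assumes f: "integrable (Iv a b) f" and g: "continuous_on {a..b} g"
  shows "integrable (Iv a b) (\<lambda>s. f s * g s)"
proof -
  obtain M where M: "\<And>x. x \<in> {a..b} \<Longrightarrow> norm (g x) \<le> M"
    using continuous_on_compact_bound[OF compact_Icc g] by blast
  show ?thesis
  proof (rule Bochner_Integration.integrable_bound)
    show "integrable (Iv a b) (\<lambda>s. norm (f s) * M)" using f by simp
    show "(\<lambda>s. f s * g s) \<in> borel_measurable (Iv a b)"
      using f continuous_imp_integrable_real[OF g] by (intro borel_measurable_times) auto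
    show "AE x in Iv a b. norm (f x * g x) \<le> norm (norm (f x) * M)"
    proof (rule AE_I2)
      fix x assume "x \<in> space (Iv a b)"
      then have "norm (g x) \<le> M" using M by simp
      moreover from this have "0 \<le> M" by (meson norm_ge_zero order.trans)
      ultimately show "norm (f x * g x) \<le> norm (norm (f x) * M)"
        by (simp add: norm_mult mult_left_mono)
    qed
  qed
qed

lemma has_vector_derivative_indefinite_lebesgue_integral:
  fixes f :: "real \<Rightarrow> 'b::euclidean_space"
  assumes "continuous_on {a..b} f" "x \<in> {a..b}"
  shows "((\<lambda>y. integral\<^sup>L (Iv a y) f) has_vector_derivative f x) (at x within {a..b})"
proof (rule has_vector_derivative_transform[OF assms(2)])
  show "((\<lambda>y. integral {a..y} f) has_vector_derivative f x) (at x within {a..b})"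
    by (rule integral_has_vector_derivative[OF assms])
  fix y assume "y \<in> {a..b}"
  then have "continuous_on {a..y} f" using assms(1) by (auto intro: continuous_on_subset)
  then show "integral\<^sup>L (Iv a y) f = integral {a..y} f"
    by (intro lebesgue_integral_eq_integral continuous_imp_integrable_real) auto
qed

lemma lebesgue_integral_FTC:
  fixes F F' :: "real \<Rightarrow> 'b::euclidean_space"
  assumes "a \<le> b" "\<And>y. y \<in> {a..b} \<Longrightarrow> (F has_vector_derivative F' y) (at y within {a..b})"
    and "continuous_on {a..b} F'"
  shows "integral\<^sup>L (Iv a b) F' = F b - F a"
proof -
  have "(F' has_integral (F b - F a)) {a..b}"
    using fundamental_theorem_of_calculus[OF assms(1,2)] by auto
  then show ?thesis
    using lebesgue_integral_eq_integral[OF continuous_imp_integrable_real[OF assms(3)]]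
    by (simp add: integral_unique)
qed

lemma continuous_on_indefinite_lebesgue_integral:
  fixes f :: "real \<Rightarrow> 'b::euclidean_space"
  assumes "integrable (Iv a b) f"
  shows "continuous_on {a..b} (\<lambda>x. integral\<^sup>L (Iv a x) f)"
proof -
  have "continuous_on {a..b} (\<lambda>x. integral {a..x} f)"
    by (rule indefinite_integral_continuous_1) (use assms integrable_on_lebesgue_on in force)
  moreover have "integral\<^sup>L (Iv a x) f = integral {a..x} f" if "x \<in> {a..b}" for x
  proof (rule lebesgue_integral_eq_integral)
    show "integrable (Iv a x) f"
      using that by (intro integrable_subinterval[OF assms]) auto
  qed simp
  ultimately show ?thesis by (metis (no_types, lifting) continuous_on_cong)
qed

lemma has_vector_derivative_exp_indefinite_integral:
  fixes a :: "real \<Rightarrow> complex"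
  assumes "continuous_on {x0..x1} a" "y \<in> {x0..x1}"
  shows "((\<lambda>y. exp (integral\<^sup>L (Iv x0 y) a)) has_vector_derivative
           a y * exp (integral\<^sup>L (Iv x0 y) a)) (at y within {x0..x1})"
  using field_vector_diff_chain_within[OF has_vector_derivative_indefinite_lebesgue_integral[OF assms]
      has_field_derivative_at_within[OF DERIV_exp]]
  by (simp add: o_def mult.commute)

lemma AE_lebesgue_on_subset:
  assumes "AE x in lebesgue_on T. P x" "S \<subseteq> T" "S \<in> sets lebesgue" "T \<in> sets lebesgue"
  shows "AE x in lebesgue_on S. P x"
proof -
  have "S \<inter> space lebesgue \<in> sets lebesgue" "T \<inter> space lebesgue \<in> sets lebesgue"
    using assms(3,4) by simp_all
  note restrict = AE_restrict_space_iff[OF this(1)] AE_restrict_space_iff[OF this(2)]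
  have "AE x in lebesgue. x \<in> T \<longrightarrow> P x"
    using assms(1) unfolding restrict .
  then show ?thesis
    unfolding restrict using assms(2) by (elim eventually_mono) blast
qed

lemma lebesgue_integral_cong_AE_subinterval:
  fixes h F :: "real \<Rightarrow> 'b::euclidean_space"
  assumes h: "integrable (Iv a b) h" and F: "integrable (Iv a b) F"
    and ae: "AE x in Iv a b. h x = F x" and x: "x \<in> {a..b}"
  shows "integral\<^sup>L (Iv a x) h = integral\<^sup>L (Iv a x) F"
proof (rule integral_cong_AE)
  have sub: "{a..x} \<subseteq> {a..b}" using x by auto
  show "h \<in> borel_measurable (Iv a x)" "F \<in> borel_measurable (Iv a x)"
    using integrable_subinterval[OF h sub] integrable_subinterval[OF F sub] by simp_all
  show "AE x in Iv a x. h x = F x"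
    by (rule AE_lebesgue_on_subset[OF ae sub]) simp_all
qed

lemma integral_exp_minus_indefinite_integral:
  fixes a :: "real \<Rightarrow> complex"
  assumes a: "continuous_on {x0..x1} a" and "x0 \<le> s" "s \<le> x" "x \<le> x1"
  shows "integral\<^sup>L (Iv s x) (\<lambda>t. a t * exp (- integral\<^sup>L (Iv x0 t) a))
           = exp (- integral\<^sup>L (Iv x0 s) a) - exp (- integral\<^sup>L (Iv x0 x) a)"
proof -
  have sub: "{s..x} \<subseteq> {x0..x1}" using assms by auto
  have ma: "continuous_on {x0..x1} (\<lambda>t. - a t)" using a by (intro continuous_intros)
  have cont: "continuous_on {s..x} (\<lambda>t. a t * exp (- integral\<^sup>L (Iv x0 t) a))"
    using continuous_on_subset[OF a sub] continuous_on_subset[OF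
        continuous_on_indefinite_lebesgue_integral[OF continuous_imp_integrable_real[OF a]] sub]
    by (intro continuous_intros)
  have "integral\<^sup>L (Iv s x) (\<lambda>t. a t * exp (- integral\<^sup>L (Iv x0 t) a))
          = - exp (- integral\<^sup>L (Iv x0 x) a) - - exp (- integral\<^sup>L (Iv x0 s) a)"
  proof (rule lebesgue_integral_FTC)
    fix y assume "y \<in> {s..x}"
    then show "((\<lambda>y. - exp (- integral\<^sup>L (Iv x0 y) a)) has_vector_derivative
                 a y * exp (- integral\<^sup>L (Iv x0 y) a)) (at y within {s..x})"
      using has_vector_derivative_minus[OF has_vector_derivative_within_subset[OF
          has_vector_derivative_exp_indefinite_integral[OF ma, of y] sub]] sub by auto
  qed (rule assms(3), rule cont)
  then show ?thesis by simp
qed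

lemma lebesgue_integral_triangle_swap:
  fixes k G :: "real \<Rightarrow> complex"
  assumes k: "integrable (Iv a b) k" and G: "continuous_on {a..b} G"
  shows "integral\<^sup>L (Iv a b) (\<lambda>t. G t * integral\<^sup>L (Iv a t) k)
       = integral\<^sup>L (Iv a b) (\<lambda>s. k s * integral\<^sup>L (Iv s b) G)"
proof -
  define M where "M = Iv a b"
  have fin: "finite_measure M"
    unfolding M_def by (rule finite_measure_lebesgue_on) simp
  interpret P: pair_sigma_finite M M
    using fin by (simp add: pair_sigma_finite_def finite_measure_def)
  define H where "H = (\<lambda>s t. if s \<le> t then k s * G t else 0)"
  have [measurable]: "k \<in> borel_measurable M" "G \<in> borel_measurable M"
    using k continuous_imp_integrable_real[OF G] unfolding M_def by auto
  have idm: "(\<lambda>x. x) \<in> borel_measurable M"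
    unfolding M_def using id_borel_measurable_lebesgue_on by (simp add: id_def)
  have [measurable]: "(\<lambda>p. fst p :: real) \<in> borel_measurable (M \<Otimes>\<^sub>M M)"
    "(\<lambda>p. snd p :: real) \<in> borel_measurable (M \<Otimes>\<^sub>M M)"
    by (rule measurable_compose[OF measurable_fst idm], rule measurable_compose[OF measurable_snd idm])
  obtain B where B: "B \<ge> 0" "\<And>x. x \<in> {a..b} \<Longrightarrow> norm (G x) \<le> B"
    using continuous_on_compact_bound[OF compact_Icc G] by blast
  have bound_integrable: "integrable (M \<Otimes>\<^sub>M M) (\<lambda>p. norm (k (fst p)) * B)"
    by (rule P.Fubini_integrable) (use k in \<open>auto simp: M_def\<close>)
  have H_integrable: "integrable (M \<Otimes>\<^sub>M M) (case_prod H)"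
  proof (rule Bochner_Integration.integrable_bound[OF bound_integrable])
    show "case_prod H \<in> borel_measurable (M \<Otimes>\<^sub>M M)"
      unfolding H_def by (simp add: case_prod_beta') measurable
    have "norm (H s t) \<le> norm (k s) * B" if "t \<in> {a..b}" for s t
      using B that by (auto simp: H_def norm_mult intro: mult_left_mono)
    then show "AE p in M \<Otimes>\<^sub>M M. norm (case_prod H p) \<le> norm (norm (k (fst p)) * B)"
      using B(1) by (intro AE_I2) (auto simp: space_pair_measure M_def)
  qed
  have inner_left: "G t * integral\<^sup>L (Iv a t) k = (\<integral>s. H s t \<partial>M)" if "t \<in> {a..b}" for t
  proof -
    have "integral\<^sup>L (Iv a t) k = integral\<^sup>L M (\<lambda>s. if s \<in> {a..t} then k s else 0)"
      unfolding M_def using that by (intro integral_restrict[symmetric]) auto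
    also have "\<dots> = integral\<^sup>L M (\<lambda>s. if s \<le> t then k s else 0)"
      by (intro Bochner_Integration.integral_cong) (auto simp: M_def)
    finally show ?thesis
      unfolding H_def by (simp add: integral_mult_right_zero[symmetric] if_distrib mult.commute cong: if_cong)
  qed
  have inner_right: "k s * integral\<^sup>L (Iv s b) G = (\<integral>t. H s t \<partial>M)" if "s \<in> {a..b}" for s
  proof -
    have "integral\<^sup>L (Iv s b) G = integral\<^sup>L M (\<lambda>t. if t \<in> {s..b} then G t else 0)"
      unfolding M_def using that by (intro integral_restrict[symmetric]) auto
    also have "\<dots> = integral\<^sup>L M (\<lambda>t. if s \<le> t then G t else 0)"
      by (intro Bochner_Integration.integral_cong) (auto simp: M_def)
    finally show ?thesis
      unfolding H_def by (simp add: integral_mult_right_zero[symmetric] if_distrib cong: if_cong)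
  qed
  have "integral\<^sup>L M (\<lambda>t. G t * integral\<^sup>L (Iv a t) k) = (\<integral>t. (\<integral>s. H s t \<partial>M) \<partial>M)"
    using inner_left by (intro Bochner_Integration.integral_cong) (auto simp: M_def)
  also have "\<dots> = (\<integral>s. (\<integral>t. H s t \<partial>M) \<partial>M)"
    by (rule P.Fubini_integral[OF H_integrable])
  also have "\<dots> = integral\<^sup>L M (\<lambda>s. k s * integral\<^sup>L (Iv s b) G)"
    using inner_right by (intro Bochner_Integration.integral_cong) (auto simp: M_def)
  finally show ?thesis unfolding M_def .
qed

lemma L1norm_le_AE_bound:
  assumes "a \<le> b" "integrable (Iv a b) f" "AE x in Iv a b. norm (f x) \<le> B"
  shows "L1norm a b f \<le> (b - a) * B"
proof -
  have "L1norm a b f \<le> integral\<^sup>L (Iv a b) (\<lambda>_. B)"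
    unfolding L1norm_def
    using assms(2,3) finite_measure.integrable_const[OF finite_measure_lebesgue_on[of "{a..b}"]]
    by (intro integral_mono_AE) auto
  also have "\<dots> = (b - a) * B" using assms(1) by (simp add: measure_restrict_space)
  finally show ?thesis .
qed

lemma not_AE_False_interval:
  assumes "a < b"
  shows "\<not> (AE x in Iv a b. False)"
proof
  assume "AE x in Iv a b. False"
  then have "emeasure (Iv a b) (space (Iv a b)) = 0"
    by (simp add: eventually_False ae_filter_eq_bot_iff)
  moreover have "emeasure (Iv a b) (space (Iv a b)) = ennreal (b - a)"
    using assms by (simp add: emeasure_restrict_space)
  ultimately show False using assms by simp
qed

section \<open>Linear first-order integral equations\<close>

lemma linear_integral_equation_homogeneous:
  fixes a u :: "real \<Rightarrow> complex"
  assumes a: "continuous_on {x0..x1} a" and u: "continuous_on {x0..x1} u"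
    and eq: "\<And>y. y \<in> {x0..x1} \<Longrightarrow> u y = u x0 - integral\<^sup>L (Iv x0 y) (\<lambda>s. a s * u s)"
    and x: "x \<in> {x0..x1}"
  shows "u x = u x0 * exp (- integral\<^sup>L (Iv x0 x) a)"
proof -
  define D where "D = (\<lambda>y. u y * exp (integral\<^sup>L (Iv x0 y) a))"
  have "(D has_vector_derivative 0) (at y within {x0..x1})" if y: "y \<in> {x0..x1}" for y
  proof -
    have "continuous_on {x0..x1} (\<lambda>s. a s * u s)" using a u by (intro continuous_intros)
    from has_vector_derivative_diff[OF has_vector_derivative_const[of "u x0"]
        has_vector_derivative_indefinite_lebesgue_integral[OF this y]]
    have "(u has_vector_derivative - (a y * u y)) (at y within {x0..x1})"
      using has_vector_derivative_transform[OF y eq] by simp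
    from has_vector_derivative_mult[OF this has_vector_derivative_exp_indefinite_integral[OF a y]]
    show ?thesis unfolding D_def by (simp add: algebra_simps)
  qed
  then obtain c where c: "\<And>y. y \<in> {x0..x1} \<Longrightarrow> D y = c"
    using has_vector_derivative_zero_constant[of "{x0..x1}" D] by blast
  have "D x = D x0" using c x by (metis atLeastAtMost_iff order_refl order_trans)
  then show ?thesis unfolding D_def by (simp add: exp_minus field_simps)
qed

definition variation_of_constants ::
  "(real \<Rightarrow> complex) \<Rightarrow> (real \<Rightarrow> complex) \<Rightarrow> real \<Rightarrow> complex \<Rightarrow> real \<Rightarrow> complex" where
  "variation_of_constants a f x0 c x =
     exp (- integral\<^sup>L (Iv x0 x) a) *
       (c + integral\<^sup>L (Iv x0 x) (\<lambda>s. f s * exp (integral\<^sup>L (Iv x0 s) a)))"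

lemma variation_of_constants_start [simp]: "variation_of_constants a f x0 c x0 = c"
  by (simp add: variation_of_constants_def)

lemma variation_of_constants_affine:
  "variation_of_constants a f x0 c x
     = c * variation_of_constants a (\<lambda>_. 0) x0 1 x + variation_of_constants a f x0 0 x"
  by (simp add: variation_of_constants_def algebra_simps)

lemma integrable_mult_exp_indefinite_integral:
  fixes a f :: "real \<Rightarrow> complex"
  assumes a: "continuous_on {x0..x1} a" and f: "integrable (Iv x0 x1) f"
  shows "integrable (Iv x0 x1) (\<lambda>s. f s * exp (integral\<^sup>L (Iv x0 s) a))"
  using continuous_on_indefinite_lebesgue_integral[OF continuous_imp_integrable_real[OF a]]
  by (intro integrable_mult_continuous[OF f] continuous_intros)

lemma continuous_on_variation_of_constants:
  assumes a: "continuous_on {x0..x1} a" and f: "integrable (Iv x0 x1) f"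
  shows "continuous_on {x0..x1} (variation_of_constants a f x0 c)"
  unfolding variation_of_constants_def
  using continuous_on_indefinite_lebesgue_integral[OF continuous_imp_integrable_real[OF a]]
    continuous_on_indefinite_lebesgue_integral[OF integrable_mult_exp_indefinite_integral[OF a f]]
  by (intro continuous_intros)

lemma variation_of_constants_solves:
  fixes a f :: "real \<Rightarrow> complex"
  assumes a: "continuous_on {x0..x1} a" and f: "integrable (Iv x0 x1) f" and x: "x \<in> {x0..x1}"
  shows "variation_of_constants a f x0 c x
           = c + integral\<^sup>L (Iv x0 x) (\<lambda>s. f s - a s * variation_of_constants a f x0 c s)"
proof -
  define E where "E = (\<lambda>y. exp (- integral\<^sup>L (Iv x0 y) a))"
  define k where "k = (\<lambda>s. f s * exp (integral\<^sup>L (Iv x0 s) a))"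
  define K where "K = (\<lambda>y. integral\<^sup>L (Iv x0 y) k)"
  have U: "variation_of_constants a f x0 c = (\<lambda>y. c * E y + E y * K y)"
    by (auto simp: variation_of_constants_def E_def K_def k_def algebra_simps)
  have sub: "{x0..x} \<subseteq> {x0..x1}" using x by auto
  have k_int: "integrable (Iv x0 x) k" and f_int: "integrable (Iv x0 x) f"
    using integrable_subinterval[OF integrable_mult_exp_indefinite_integral[OF a f] sub]
      integrable_subinterval[OF f sub] by (simp_all add: k_def)
  have "continuous_on {x0..x1} (\<lambda>t. a t * E t)"
    using continuous_on_indefinite_lebesgue_integral[OF continuous_imp_integrable_real[OF a]] a
    unfolding E_def by (intro continuous_intros)
  then have aE: "continuous_on {x0..x} (\<lambda>t. a t * E t)" using sub by (rule continuous_on_subset)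
  have K: "continuous_on {x0..x} K"
    unfolding K_def using continuous_on_indefinite_lebesgue_integral[OF k_int] .
  have aE_int: "integrable (Iv x0 x) (\<lambda>t. a t * E t)"
    and aEK_int: "integrable (Iv x0 x) (\<lambda>t. a t * E t * K t)"
    using aE K by (auto intro!: continuous_imp_integrable_real continuous_intros)
  have int_aE: "integral\<^sup>L (Iv s x) (\<lambda>t. a t * E t) = E s - E x" if "s \<in> {x0..x}" for s
    unfolding E_def using that x by (intro integral_exp_minus_indefinite_integral[OF a]) auto
  have "integral\<^sup>L (Iv x0 x) (\<lambda>t. a t * E t * K t)
          = integral\<^sup>L (Iv x0 x) (\<lambda>s. k s * integral\<^sup>L (Iv s x) (\<lambda>t. a t * E t))"
    unfolding K_def by (rule lebesgue_integral_triangle_swap[OF k_int aE])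
  also have "\<dots> = integral\<^sup>L (Iv x0 x) (\<lambda>s. f s - k s * E x)"
  proof (rule Bochner_Integration.integral_cong[OF refl])
    fix s assume "s \<in> space (Iv x0 x)"
    then have s: "s \<in> {x0..x}" by simp
    have "k s * E s = f s" by (simp add: k_def E_def exp_minus_inverse flip: mult.assoc)
    then show "k s * integral\<^sup>L (Iv s x) (\<lambda>t. a t * E t) = f s - k s * E x"
      by (simp add: int_aE[OF s] right_diff_distrib)
  qed
  also have "\<dots> = integral\<^sup>L (Iv x0 x) f - K x * E x"
    using f_int k_int by (simp add: K_def)
  finally have int_aEK: "integral\<^sup>L (Iv x0 x) (\<lambda>t. a t * E t * K t)
                           = integral\<^sup>L (Iv x0 x) f - K x * E x" .
  have E0: "E x0 = 1" by (simp add: E_def)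
  have left_end: "x0 \<in> {x0..x}" using x by simp
  have "(\<lambda>s. f s - a s * (c * E s + E s * K s))
          = (\<lambda>s. f s - c * (a s * E s) - a s * E s * K s)"
    by (simp add: fun_eq_iff algebra_simps)
  then have "integral\<^sup>L (Iv x0 x) (\<lambda>s. f s - a s * (c * E s + E s * K s))
          = integral\<^sup>L (Iv x0 x) f - c * integral\<^sup>L (Iv x0 x) (\<lambda>t. a t * E t)
              - integral\<^sup>L (Iv x0 x) (\<lambda>t. a t * E t * K t)"
    using f_int aE_int aEK_int by simp
  also have "\<dots> = c * E x + E x * K x - c"
    unfolding int_aE[of x0, OF left_end] int_aEK E0 by (simp add: algebra_simps)
  finally show ?thesis by (simp add: U)
qed

lemma variation_of_constants_unique:
  fixes a f u :: "real \<Rightarrow> complex"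
  assumes a: "continuous_on {x0..x1} a" and f: "integrable (Iv x0 x1) f"
    and u: "continuous_on {x0..x1} u"
    and eq: "\<And>y. y \<in> {x0..x1} \<Longrightarrow> u y = u x0 + integral\<^sup>L (Iv x0 y) (\<lambda>s. f s - a s * u s)"
    and x: "x \<in> {x0..x1}"
  shows "u x = variation_of_constants a f x0 (u x0) x"
proof -
  define V where "V = variation_of_constants a f x0 (u x0)"
  have V: "continuous_on {x0..x1} V"
    unfolding V_def by (rule continuous_on_variation_of_constants[OF a f])
  have "u y - V y = (u x0 - V x0) - integral\<^sup>L (Iv x0 y) (\<lambda>s. a s * (u s - V s))"
    if y: "y \<in> {x0..x1}" for y
  proof -
    have sub: "{x0..y} \<subseteq> {x0..x1}" using y by auto
    have f_int: "integrable (Iv x0 y) f" using integrable_subinterval[OF f sub] .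
    have au: "integrable (Iv x0 y) (\<lambda>s. a s * u s)" and aV: "integrable (Iv x0 y) (\<lambda>s. a s * V s)"
      using continuous_on_subset[OF a sub] continuous_on_subset[OF u sub] continuous_on_subset[OF V sub]
      by (auto intro!: continuous_imp_integrable_real continuous_intros)
    have "V y = u x0 + integral\<^sup>L (Iv x0 y) (\<lambda>s. f s - a s * V s)"
      unfolding V_def by (rule variation_of_constants_solves[OF a f y])
    then show ?thesis
      using eq[OF y] f_int au aV by (simp add: V_def algebra_simps)
  qed
  from linear_integral_equation_homogeneous[OF a continuous_on_diff[OF u V] this x]
  show ?thesis by (simp add: V_def)
qed

lemma variation_of_constants_AE_zero:
  assumes "AE s in Iv x0 x1. f s = 0" "x \<in> {x0..x1}"
  shows "variation_of_constants a f x0 0 x = 0"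
proof -
  have "AE s in Iv x0 x. f s = 0"
    using assms by (intro AE_lebesgue_on_subset[OF assms(1)]) auto
  then have "integral\<^sup>L (Iv x0 x) (\<lambda>s. f s * exp (integral\<^sup>L (Iv x0 s) a)) = 0"
    by (intro integral_eq_zero_AE) (auto elim: eventually_mono)
  then show ?thesis by (simp add: variation_of_constants_def)
qed

lemma variation_of_constants_bound:
  fixes a :: "real \<Rightarrow> complex"
  assumes a: "continuous_on {x0..x1} a"
  obtains M where "M \<ge> 0"
    "\<And>f c x. integrable (Iv x0 x1) f \<Longrightarrow> x \<in> {x0..x1} \<Longrightarrow>
       norm (variation_of_constants a f x0 c x)
         \<le> M * (norm c + integral\<^sup>L (Iv x0 x1) (\<lambda>s. norm (f s)))"
proof -
  have A: "continuous_on {x0..x1} (\<lambda>x. integral\<^sup>L (Iv x0 x) a)"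
    by (rule continuous_on_indefinite_lebesgue_integral[OF continuous_imp_integrable_real[OF a]])
  obtain M1 where M1: "M1 \<ge> 0" "\<And>x. x \<in> {x0..x1} \<Longrightarrow> norm (exp (- integral\<^sup>L (Iv x0 x) a)) \<le> M1"
    using continuous_on_compact_bound[OF compact_Icc continuous_on_exp[OF continuous_on_minus[OF A]]]
    by blast
  obtain M2 where M2: "M2 \<ge> 0" "\<And>x. x \<in> {x0..x1} \<Longrightarrow> norm (exp (integral\<^sup>L (Iv x0 x) a)) \<le> M2"
    using continuous_on_compact_bound[OF compact_Icc continuous_on_exp[OF A]] by blast
  have "norm (variation_of_constants a f x0 c x)
          \<le> M1 * max 1 M2 * (norm c + integral\<^sup>L (Iv x0 x1) (\<lambda>s. norm (f s)))"
    if f: "integrable (Iv x0 x1) f" and x: "x \<in> {x0..x1}" for f c x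
  proof -
    define N where "N = integral\<^sup>L (Iv x0 x1) (\<lambda>s. norm (f s))"
    have N: "N \<ge> 0" unfolding N_def by simp
    have "norm (integral\<^sup>L (Iv x0 x) (\<lambda>s. f s * exp (integral\<^sup>L (Iv x0 s) a)))
            \<le> integral\<^sup>L (Iv x0 x) (\<lambda>s. norm (f s * exp (integral\<^sup>L (Iv x0 s) a)))"
      by (rule integral_norm_bound)
    also have "\<dots> \<le> integral\<^sup>L (Iv x0 x1) (\<lambda>s. norm (f s) * M2)"
    proof (rule integral_mono_lebesgue_on_AE)
      have "norm (f s * exp (integral\<^sup>L (Iv x0 s) a)) \<le> norm (f s) * M2" if "s \<in> {x0..x}" for s
        using M2(2)[of s] that x by (simp add: norm_mult mult_left_mono)
      then show "AE s in Iv x0 x. norm (f s * exp (integral\<^sup>L (Iv x0 s) a)) \<le> norm (f s) * M2"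
        by (intro AE_I2) simp
    qed (use f x M2(1) in auto)
    also have "\<dots> = M2 * N" by (simp add: N_def mult.commute)
    finally have "norm (c + integral\<^sup>L (Iv x0 x) (\<lambda>s. f s * exp (integral\<^sup>L (Iv x0 s) a)))
                    \<le> norm c + M2 * N"
      by (meson add_left_mono norm_triangle_ineq order_trans)
    also have "\<dots> \<le> max 1 M2 * (norm c + N)"
      using mult_right_mono[of 1 "max 1 M2" "norm c"] mult_right_mono[of M2 "max 1 M2" N] N
      by (simp add: distrib_left)
    finally show ?thesis
      unfolding variation_of_constants_def norm_mult N_def[symmetric] mult.assoc
      using M1 x by (intro mult_mono) auto
  qed
  then show ?thesis using that[of "M1 * max 1 M2"] M1(1) by simp
qed

section \<open>The transport operator with nonlocal boundary condition\<close>

locale transport_operator =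
  fixes x0 x1 :: real and g w q :: "real \<Rightarrow> real"
  assumes interval: "x0 < x1"
    and g_continuous: "continuous_on {x0..x1} g"
    and g_pos: "\<And>x. x \<in> {x0..x1} \<Longrightarrow> g x > 0"
    and w_continuous: "continuous_on {x0..x1} w"
    and q_integrable: "integrable (Iv x0 x1) q"
begin

text \<open>For u = g \<phi> the eigenvalue equation l \<phi> - L \<phi> = f becomes u' = f - rate l u, and the
  boundary condition of the domain becomes u x0 = boundary u.\<close>

definition rate :: "complex \<Rightarrow> real \<Rightarrow> complex" where
  "rate l s = (l + of_real (w s)) / of_real (g s)"

definition boundary :: "(real \<Rightarrow> complex) \<Rightarrow> complex" where
  "boundary u = integral\<^sup>L (Iv x0 x1) (\<lambda>x. of_real (q x / g x) * u x)"

lemma g_nonzero: "x \<in> {x0..x1} \<Longrightarrow> g x \<noteq> 0"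
  using g_pos[of x] by simp

lemma continuous_on_rate: "continuous_on {x0..x1} (rate l)"
  unfolding rate_def using g_continuous w_continuous g_nonzero by (intro continuous_intros) auto

lemma continuous_on_inverse_g: "continuous_on {x0..x1} (\<lambda>x. 1 / complex_of_real (g x))"
  using g_continuous g_nonzero by (intro continuous_intros) auto

lemma integrable_boundary:
  fixes u :: "real \<Rightarrow> complex"
  assumes "continuous_on {x0..x1} u"
  shows "integrable (Iv x0 x1) (\<lambda>x. of_real (q x / g x) * u x)"
proof -
  have "integrable (Iv x0 x1) (\<lambda>x. complex_of_real (q x))"
    using q_integrable by (simp add: complex_of_real_integrable_eq)
  then have "integrable (Iv x0 x1) (\<lambda>x. of_real (q x) * (u x * (1 / complex_of_real (g x))))"
    by (rule integrable_mult_continuous[OF _ continuous_on_mult[OF assms continuous_on_inverse_g]])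
  then show ?thesis by (simp add: field_simps)
qed

lemma boundary_AE_eq:
  assumes \<phi>: "integrable (Iv x0 x1) \<phi>" and u: "continuous_on {x0..x1} u"
    and g\<phi>: "AE x in Iv x0 x1. u x = of_real (g x) * \<phi> x"
  shows "integral\<^sup>L (Iv x0 x1) (\<lambda>x. of_real (q x) * \<phi> x) = boundary u"
  unfolding boundary_def
proof (rule integral_cong_AE)
  have [measurable]: "q \<in> borel_measurable (Iv x0 x1)" "\<phi> \<in> borel_measurable (Iv x0 x1)"
    "g \<in> borel_measurable (Iv x0 x1)" "u \<in> borel_measurable (Iv x0 x1)"
    using q_integrable \<phi> continuous_imp_integrable_real[OF g_continuous]
      continuous_imp_integrable_real[OF u] by auto
  show "(\<lambda>x. of_real (q x) * \<phi> x) \<in> borel_measurable (Iv x0 x1)" by measurable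
  show "(\<lambda>x. of_real (q x / g x) * u x) \<in> borel_measurable (Iv x0 x1)" by measurable
  show "AE x in Iv x0 x1. of_real (q x) * \<phi> x = of_real (q x / g x) * u x"
    using g\<phi> AE_space by eventually_elim (simp add: g_nonzero)
qed

lemma boundary_linear:
  assumes "continuous_on {x0..x1} u" "continuous_on {x0..x1} v"
  shows "boundary (\<lambda>x. c * u x + v x) = c * boundary u + boundary v"
proof -
  have "(\<lambda>x. of_real (q x / g x) * (c * u x + v x))
          = (\<lambda>x. c * (of_real (q x / g x) * u x) + of_real (q x / g x) * v x)"
    by (simp add: fun_eq_iff distrib_left)
  then show ?thesis
    unfolding boundary_def
    by (simp only: Bochner_Integration.integral_add[OF Bochner_Integration.integrable_mult_right
          [OF integrable_boundary[OF assms(1)]] integrable_boundary[OF assms(2)]]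
          integral_mult_right_zero)
qed

lemma norm_boundary_le:
  fixes u :: "real \<Rightarrow> complex"
  assumes u: "continuous_on {x0..x1} u" and bound: "\<And>x. x \<in> {x0..x1} \<Longrightarrow> norm (u x) \<le> B"
  shows "norm (boundary u) \<le> integral\<^sup>L (Iv x0 x1) (\<lambda>x. norm (of_real (q x / g x) :: complex)) * B"
proof -
  have "norm (boundary u) \<le> integral\<^sup>L (Iv x0 x1) (\<lambda>x. norm (of_real (q x / g x) * u x))"
    unfolding boundary_def by (rule integral_norm_bound)
  also have "\<dots> \<le> integral\<^sup>L (Iv x0 x1) (\<lambda>x. norm (of_real (q x / g x) :: complex) * B)"
  proof (rule integral_mono)
    show "integrable (Iv x0 x1) (\<lambda>x. norm (of_real (q x / g x) * u x))"
      using integrable_boundary[OF u] by simp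
    show "integrable (Iv x0 x1) (\<lambda>x. norm (of_real (q x / g x) :: complex) * B)"
      using integrable_boundary[of "\<lambda>_. 1"] by simp
    fix x assume "x \<in> space (Iv x0 x1)"
    then show "norm (of_real (q x / g x) * u x) \<le> norm (of_real (q x / g x) :: complex) * B"
      unfolding norm_mult using bound by (intro mult_left_mono) simp_all
  qed
  finally show ?thesis by simp
qed

lemma xi_eq_boundary:
  "xi x0 x1 g w q l = boundary (variation_of_constants (rate l) (\<lambda>_. 0) x0 1) - 1"
  by (simp add: xi_def boundary_def variation_of_constants_def rate_def[abs_def])

lemma boundary_variation_of_constants:
  assumes f: "integrable (Iv x0 x1) f"
  shows "boundary (variation_of_constants (rate l) f x0 c)
           = c * (xi x0 x1 g w q l + 1) + boundary (variation_of_constants (rate l) f x0 0)"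
proof -
  have "variation_of_constants (rate l) f x0 c
          = (\<lambda>x. c * variation_of_constants (rate l) (\<lambda>_. 0) x0 1 x
                  + variation_of_constants (rate l) f x0 0 x)"
    by (rule ext, rule variation_of_constants_affine)
  then show ?thesis
    unfolding xi_eq_boundary
    using boundary_linear continuous_on_variation_of_constants[OF continuous_on_rate]
      integrable_zero f by simp
qed

lemma boundary_variation_of_constants_bound:
  obtains B where "\<And>f. integrable (Iv x0 x1) f \<Longrightarrow>
    norm (boundary (variation_of_constants (rate l) f x0 0))
      \<le> B * integral\<^sup>L (Iv x0 x1) (\<lambda>s. norm (f s))"
proof -
  obtain M where M: "\<And>f c x. integrable (Iv x0 x1) f \<Longrightarrow> x \<in> {x0..x1} \<Longrightarrow>
       norm (variation_of_constants (rate l) f x0 c x)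
         \<le> M * (norm c + integral\<^sup>L (Iv x0 x1) (\<lambda>s. norm (f s)))"
    using variation_of_constants_bound[OF continuous_on_rate] by blast
  have "norm (boundary (variation_of_constants (rate l) f x0 0))
          \<le> integral\<^sup>L (Iv x0 x1) (\<lambda>x. norm (of_real (q x / g x) :: complex)) * M
              * integral\<^sup>L (Iv x0 x1) (\<lambda>s. norm (f s))"
    if f: "integrable (Iv x0 x1) f" for f
    unfolding mult.assoc using M[OF f, of _ 0]
    by (intro norm_boundary_le continuous_on_variation_of_constants[OF continuous_on_rate f]) simp
  then show ?thesis using that by blast
qed

lemma L_graph_variation_of_constants:
  assumes f: "integrable (Iv x0 x1) f"
    and c: "c * xi x0 x1 g w q l = - boundary (variation_of_constants (rate l) f x0 0)"
  shows "L_graph x0 x1 g w q (\<lambda>x. variation_of_constants (rate l) f x0 c x / of_real (g x))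
           (\<lambda>x. l * variation_of_constants (rate l) f x0 c x / of_real (g x) - f x)"
proof -
  define U where "U = variation_of_constants (rate l) f x0 c"
  have U: "continuous_on {x0..x1} U"
    unfolding U_def by (rule continuous_on_variation_of_constants[OF continuous_on_rate f])
  have \<phi>: "integrable (Iv x0 x1) (\<lambda>x. U x / of_real (g x))"
    using U g_continuous g_nonzero by (intro continuous_imp_integrable_real continuous_intros) auto
  have h: "integrable (Iv x0 x1) (\<lambda>x. f x - rate l x * U x)"
    using f continuous_imp_integrable_real[OF continuous_on_mult[OF continuous_on_rate U]] by simp
  have U_eq: "\<forall>x\<in>{x0..x1}. U x = U x0 + integral\<^sup>L (Iv x0 x) (\<lambda>s. f s - rate l s * U s)"
    unfolding U_def using variation_of_constants_solves[OF continuous_on_rate f] by simp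
  have gU: "AE x in Iv x0 x1. U x = of_real (g x) * (U x / of_real (g x))"
    by (rule AE_I2) (simp add: g_nonzero)
  have "integral\<^sup>L (Iv x0 x1) (\<lambda>x. of_real (q x) * (U x / of_real (g x))) = boundary U"
    by (rule boundary_AE_eq[OF \<phi> U gU])
  also have "\<dots> = U x0"
    using c unfolding U_def boundary_variation_of_constants[OF f, where c = c]
    by (simp add: algebra_simps)
  finally have U0: "U x0 = integral\<^sup>L (Iv x0 x1) (\<lambda>x. of_real (q x) * (U x / of_real (g x)))" ..
  have \<psi>: "AE x in Iv x0 x1. l * U x / of_real (g x) - f x
            = - (f x - rate l x * U x) - of_real (w x) * (U x / of_real (g x))"
    by (rule AE_I2) (simp add: g_nonzero rate_def field_simps)
  show ?thesis
    unfolding L_graph_def U_def[symmetric] using \<phi> h U_eq gU U0 \<psi> by blast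
qed

lemma L_graph_integral_equation:
  fixes l :: complex
  assumes graph: "L_graph x0 x1 g w q \<phi> \<psi>"
  defines "f \<equiv> \<lambda>x. l * \<phi> x - \<psi> x"
  obtains u where "integrable (Iv x0 x1) f" "continuous_on {x0..x1} u"
    "\<And>x. x \<in> {x0..x1} \<Longrightarrow> u x = u x0 + integral\<^sup>L (Iv x0 x) (\<lambda>s. f s - rate l s * u s)"
    "AE x in Iv x0 x1. u x = of_real (g x) * \<phi> x" "u x0 = boundary u"
proof -
  from graph obtain u h where \<phi>: "integrable (Iv x0 x1) \<phi>" and h: "integrable (Iv x0 x1) h"
    and u_eq: "\<forall>x\<in>{x0..x1}. u x = u x0 + integral\<^sup>L (Iv x0 x) h"
    and g\<phi>: "AE x in Iv x0 x1. u x = of_real (g x) * \<phi> x"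
    and u0: "u x0 = integral\<^sup>L (Iv x0 x1) (\<lambda>x. of_real (q x) * \<phi> x)"
    and \<psi>: "AE x in Iv x0 x1. \<psi> x = - h x - of_real (w x) * \<phi> x"
    unfolding L_graph_def by blast
  have f_AE: "AE x in Iv x0 x1. l * \<phi> x + h x + \<phi> x * of_real (w x) = f x"
  proof (rule eventually_mono[OF \<psi>])
    fix x assume "\<psi> x = - h x - of_real (w x) * \<phi> x"
    then show "l * \<phi> x + h x + \<phi> x * of_real (w x) = f x" unfolding f_def by simp
  qed
  have "integrable (Iv x0 x1) (\<lambda>x. l * \<phi> x + h x + \<phi> x * of_real (w x))"
    using \<phi> h integrable_mult_continuous[OF \<phi> continuous_on_of_real[OF w_continuous]]
    by (intro Bochner_Integration.integrable_add Bochner_Integration.integrable_mult_right)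
  then have f: "integrable (Iv x0 x1) f"
    by (rule integrable_lebesgue_on_AE_eq[OF _ _ f_AE, rotated]) simp
  have "continuous_on {x0..x1} (\<lambda>x. u x0 + integral\<^sup>L (Iv x0 x) h)"
    using continuous_on_indefinite_lebesgue_integral[OF h] by (intro continuous_intros)
  then have u: "continuous_on {x0..x1} u"
    using u_eq by (metis (no_types, lifting) continuous_on_cong)
  have h_AE: "AE x in Iv x0 x1. h x = f x - rate l x * u x"
    using \<psi> g\<phi> AE_space
  proof eventually_elim
    case (elim x)
    then have "rate l x * u x = (l + of_real (w x)) * \<phi> x"
      by (simp add: rate_def g_nonzero)
    then show ?case by (simp add: f_def elim(1) algebra_simps)
  qed
  have F: "integrable (Iv x0 x1) (\<lambda>x. f x - rate l x * u x)"
    using f continuous_imp_integrable_real[OF continuous_on_mult[OF continuous_on_rate u]] by simp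
  have "u x = u x0 + integral\<^sup>L (Iv x0 x) (\<lambda>s. f s - rate l s * u s)"
    if x: "x \<in> {x0..x1}" for x
  proof -
    have "u x = u x0 + integral\<^sup>L (Iv x0 x) h" using u_eq x by blast
    then show ?thesis by (simp add: lebesgue_integral_cong_AE_subinterval[OF h F h_AE x])
  qed
  moreover have "u x0 = boundary u"
    unfolding u0 by (rule boundary_AE_eq[OF \<phi> u g\<phi>])
  ultimately show ?thesis using that f u g\<phi> by blast
qed

lemma L_graph_representation:
  fixes l :: complex
  assumes graph: "L_graph x0 x1 g w q \<phi> \<psi>"
  defines "f \<equiv> \<lambda>x. l * \<phi> x - \<psi> x"
  obtains c where "integrable (Iv x0 x1) f"
    "AE x in Iv x0 x1. \<phi> x = variation_of_constants (rate l) f x0 c x / of_real (g x)"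
    "c * xi x0 x1 g w q l = - boundary (variation_of_constants (rate l) f x0 0)"
proof -
  obtain u where f: "integrable (Iv x0 x1) f" and u: "continuous_on {x0..x1} u"
    and u_eq: "\<And>x. x \<in> {x0..x1} \<Longrightarrow> u x = u x0 + integral\<^sup>L (Iv x0 x) (\<lambda>s. f s - rate l s * u s)"
    and g\<phi>: "AE x in Iv x0 x1. u x = of_real (g x) * \<phi> x" and u0: "u x0 = boundary u"
    using L_graph_integral_equation[OF graph, of l] unfolding f_def by blast
  define c where "c = u x0"
  have u_solution: "u x = variation_of_constants (rate l) f x0 c x" if "x \<in> {x0..x1}" for x
    unfolding c_def by (rule variation_of_constants_unique[OF continuous_on_rate f u u_eq that])
  have "c = boundary u" unfolding c_def by (rule u0)
  also have "\<dots> = boundary (variation_of_constants (rate l) f x0 c)"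
    unfolding boundary_def using u_solution by (intro Bochner_Integration.integral_cong) simp_all
  also have "\<dots> = c * (xi x0 x1 g w q l + 1) + boundary (variation_of_constants (rate l) f x0 0)"
    by (rule boundary_variation_of_constants[OF f])
  finally have "c * xi x0 x1 g w q l = - boundary (variation_of_constants (rate l) f x0 0)"
    by (simp add: algebra_simps eq_neg_iff_add_eq_0)
  moreover have "AE x in Iv x0 x1. \<phi> x = variation_of_constants (rate l) f x0 c x / of_real (g x)"
    using g\<phi> AE_space by eventually_elim (simp add: u_solution g_nonzero)
  ultimately show ?thesis using that f by blast
qed

lemma L_graph_injective:
  assumes xi: "xi x0 x1 g w q l \<noteq> 0" and graph: "L_graph x0 x1 g w q \<phi> \<psi>"
    and kernel: "AE x in Iv x0 x1. l * \<phi> x - \<psi> x = 0"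
  shows "AE x in Iv x0 x1. \<phi> x = 0"
proof -
  obtain c where
    \<phi>: "AE x in Iv x0 x1. \<phi> x = variation_of_constants (rate l) (\<lambda>x. l * \<phi> x - \<psi> x) x0 c x / of_real (g x)"
    and c: "c * xi x0 x1 g w q l = - boundary (variation_of_constants (rate l) (\<lambda>x. l * \<phi> x - \<psi> x) x0 0)"
    using L_graph_representation[OF graph, of l] by blast
  have zero: "variation_of_constants (rate l) (\<lambda>x. l * \<phi> x - \<psi> x) x0 0 x = 0"
    if "x \<in> {x0..x1}" for x
    by (rule variation_of_constants_AE_zero[OF kernel that])
  then have "boundary (variation_of_constants (rate l) (\<lambda>x. l * \<phi> x - \<psi> x) x0 0) = 0"
    unfolding boundary_def by (intro integral_eq_zero_AE AE_I2) (simp add: zero)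
  then have "c = 0" using c xi by simp
  then have vanish: "variation_of_constants (rate l) (\<lambda>x. l * \<phi> x - \<psi> x) x0 c x = 0"
    if "x \<in> {x0..x1}" for x
    using zero[OF that] by simp
  show ?thesis using \<phi> AE_space by eventually_elim (simp add: vanish)
qed

lemma point_spectrum_iff: "l \<in> point_spectrum x0 x1 g w q \<longleftrightarrow> xi x0 x1 g w q l = 0"
proof
  assume "l \<in> point_spectrum x0 x1 g w q"
  then obtain \<phi> where graph: "L_graph x0 x1 g w q \<phi> (\<lambda>x. l * \<phi> x)"
    and nontrivial: "\<not> (AE x in Iv x0 x1. \<phi> x = 0)"
    unfolding point_spectrum_def by blast
  show "xi x0 x1 g w q l = 0"
    using L_graph_injective[OF _ graph] nontrivial by auto
next
  assume xi: "xi x0 x1 g w q l = 0"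
  define \<phi> where "\<phi> x = variation_of_constants (rate l) (\<lambda>_. 0) x0 1 x / of_real (g x)" for x
  have "boundary (variation_of_constants (rate l) (\<lambda>_. 0) x0 0) = 0"
    by (simp add: boundary_def variation_of_constants_def)
  then have "L_graph x0 x1 g w q \<phi> (\<lambda>x. l * variation_of_constants (rate l) (\<lambda>_. 0) x0 1 x / of_real (g x) - 0)"
    unfolding \<phi>_def using xi by (intro L_graph_variation_of_constants) simp_all
  then have "L_graph x0 x1 g w q \<phi> (\<lambda>x. l * \<phi> x)"
    by (simp add: \<phi>_def)
  moreover have "\<not> (AE x in Iv x0 x1. \<phi> x = 0)"
  proof
    assume "AE x in Iv x0 x1. \<phi> x = 0"
    then have "AE x in Iv x0 x1. False"
      using AE_space by eventually_elim (simp add: \<phi>_def variation_of_constants_def g_nonzero)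
    then show False using not_AE_False_interval[OF interval] by simp
  qed
  ultimately show "l \<in> point_spectrum x0 x1 g w q"
    unfolding point_spectrum_def by blast
qed

lemma L_graph_AE_bound:
  assumes xi: "xi x0 x1 g w q l \<noteq> 0"
  obtains K where "\<And>\<phi> \<psi>. L_graph x0 x1 g w q \<phi> \<psi> \<Longrightarrow>
    AE x in Iv x0 x1. norm (\<phi> x) \<le> K * L1norm x0 x1 (\<lambda>x. l * \<phi> x - \<psi> x)"
proof -
  obtain M where M: "M \<ge> 0"
    "\<And>f c x. integrable (Iv x0 x1) f \<Longrightarrow> x \<in> {x0..x1} \<Longrightarrow>
       norm (variation_of_constants (rate l) f x0 c x)
         \<le> M * (norm c + integral\<^sup>L (Iv x0 x1) (\<lambda>s. norm (f s)))"
    using variation_of_constants_bound[OF continuous_on_rate] by blast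
  obtain B where B: "\<And>f. integrable (Iv x0 x1) f \<Longrightarrow>
      norm (boundary (variation_of_constants (rate l) f x0 0))
        \<le> B * integral\<^sup>L (Iv x0 x1) (\<lambda>s. norm (f s))"
    using boundary_variation_of_constants_bound by blast
  obtain G where G: "\<And>x. x \<in> {x0..x1} \<Longrightarrow> norm (1 / complex_of_real (g x)) \<le> G"
    using continuous_on_compact_bound[OF compact_Icc continuous_on_inverse_g] by blast
  have "AE x in Iv x0 x1. norm (\<phi> x)
          \<le> (M * (B / norm (xi x0 x1 g w q l) + 1) * G) * L1norm x0 x1 (\<lambda>x. l * \<phi> x - \<psi> x)"
    if graph: "L_graph x0 x1 g w q \<phi> \<psi>" for \<phi> \<psi>
  proof -
    define f where "f = (\<lambda>x. l * \<phi> x - \<psi> x)"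
    define N where "N = integral\<^sup>L (Iv x0 x1) (\<lambda>s. norm (f s))"
    obtain c where f: "integrable (Iv x0 x1) f"
      and \<phi>: "AE x in Iv x0 x1. \<phi> x = variation_of_constants (rate l) f x0 c x / of_real (g x)"
      and c: "c * xi x0 x1 g w q l = - boundary (variation_of_constants (rate l) f x0 0)"
      using L_graph_representation[OF graph, of l] unfolding f_def by blast
    have "norm c * norm (xi x0 x1 g w q l) \<le> B * N"
      using c B[OF f] by (simp add: N_def flip: norm_mult)
    then have "norm c \<le> B / norm (xi x0 x1 g w q l) * N"
      using xi by (simp add: field_simps)
    then have voc_bound: "norm (variation_of_constants (rate l) f x0 c x)
                              \<le> M * (B / norm (xi x0 x1 g w q l) + 1) * N"
      if "x \<in> {x0..x1}" for x
      using M(2)[OF f that, of c] M(1) mult_left_mono[of _ _ M]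
      by (fastforce simp: N_def algebra_simps)
    have pointwise: "norm (\<phi> x) \<le> (M * (B / norm (xi x0 x1 g w q l) + 1) * G) * N"
      if "\<phi> x = variation_of_constants (rate l) f x0 c x / of_real (g x)" "x \<in> {x0..x1}" for x
    proof -
      have "norm (\<phi> x) = norm (variation_of_constants (rate l) f x0 c x) * norm (1 / complex_of_real (g x))"
        unfolding that(1) norm_mult[symmetric] by simp
      also have "\<dots> \<le> (M * (B / norm (xi x0 x1 g w q l) + 1) * N) * G"
        by (rule mult_mono'[OF voc_bound[OF that(2)] G[OF that(2)]]) simp_all
      finally show ?thesis by (simp only: mult_ac)
    qed
    have L1: "L1norm x0 x1 (\<lambda>x. l * \<phi> x - \<psi> x) = N"
      by (simp add: L1norm_def N_def f_def)
    show ?thesis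
      unfolding L1 using \<phi> AE_space by eventually_elim (rule pointwise, assumption, simp)
  qed
  then show ?thesis using that by blast
qed

lemma resolvent_bound:
  assumes "xi x0 x1 g w q l \<noteq> 0"
  shows "\<exists>C. \<forall>\<phi> \<psi>. L_graph x0 x1 g w q \<phi> \<psi> \<longrightarrow>
           L1norm x0 x1 \<phi> \<le> C * L1norm x0 x1 (\<lambda>x. l * \<phi> x - \<psi> x)"
proof -
  obtain K where K: "\<And>\<phi> \<psi>. L_graph x0 x1 g w q \<phi> \<psi> \<Longrightarrow>
      AE x in Iv x0 x1. norm (\<phi> x) \<le> K * L1norm x0 x1 (\<lambda>x. l * \<phi> x - \<psi> x)"
    using L_graph_AE_bound[OF assms] by blast
  have "L1norm x0 x1 \<phi> \<le> ((x1 - x0) * K) * L1norm x0 x1 (\<lambda>x. l * \<phi> x - \<psi> x)"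
    if graph: "L_graph x0 x1 g w q \<phi> \<psi>" for \<phi> \<psi>
  proof -
    have "integrable (Iv x0 x1) \<phi>" using graph unfolding L_graph_def by blast
    from L1norm_le_AE_bound[OF less_imp_le[OF interval] this K[OF graph]]
    show ?thesis by (simp add: mult.assoc)
  qed
  then show ?thesis by blast
qed

lemma resolvent_set_iff: "l \<in> resolvent_set x0 x1 g w q \<longleftrightarrow> xi x0 x1 g w q l \<noteq> 0"
proof
  assume "l \<in> resolvent_set x0 x1 g w q"
  then have injective: "\<And>\<phi> \<psi>. L_graph x0 x1 g w q \<phi> \<psi> \<Longrightarrow> (AE x in Iv x0 x1. l * \<phi> x - \<psi> x = 0)
                 \<Longrightarrow> (AE x in Iv x0 x1. \<phi> x = 0)"
    unfolding resolvent_set_def by blast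
  show "xi x0 x1 g w q l \<noteq> 0"
  proof
    assume "xi x0 x1 g w q l = 0"
    then obtain \<phi> where "L_graph x0 x1 g w q \<phi> (\<lambda>x. l * \<phi> x)" "\<not> (AE x in Iv x0 x1. \<phi> x = 0)"
      using point_spectrum_iff unfolding point_spectrum_def by blast
    then show False using injective by simp
  qed
next
  assume xi: "xi x0 x1 g w q l \<noteq> 0"
  have "\<exists>\<phi> \<psi>. L_graph x0 x1 g w q \<phi> \<psi> \<and> (AE x in Iv x0 x1. l * \<phi> x - \<psi> x = f x)"
    if f: "integrable (Iv x0 x1) f" for f
  proof -
    define c where "c = - boundary (variation_of_constants (rate l) f x0 0) / xi x0 x1 g w q l"
    have "c * xi x0 x1 g w q l = - boundary (variation_of_constants (rate l) f x0 0)"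
      using xi by (simp add: c_def)
    from L_graph_variation_of_constants[OF f this] show ?thesis by fastforce
  qed
  then show "l \<in> resolvent_set x0 x1 g w q"
    unfolding resolvent_set_def using L_graph_injective[OF xi] resolvent_bound[OF xi] by blast
qed

end

theorem proposition7:
  fixes x0 x1 :: real and g w q :: "real \<Rightarrow> real"
  assumes "0 < x0" and "x0 < x1"
    and "\<exists>g'. (\<forall>x\<in>{x0..x1}. (g has_real_derivative g' x) (at x within {x0..x1}))
              \<and> continuous_on {x0..x1} g'"
    and "\<forall>x\<in>{x0..x1}. g x > 0"
    and "continuous_on {x0..x1} w"
    and "AE x in lebesgue_on {x0..x1}. w x \<ge> 0"
    and "q \<in> borel_measurable (lebesgue_on {x0..x1})"
    and "\<exists>B. AE x in lebesgue_on {x0..x1}. \<bar>q x\<bar> \<le> B"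
    and "AE x in lebesgue_on {x0..x1}. q x \<ge> 0"
  shows "spectrum_L x0 x1 g w q = point_spectrum x0 x1 g w q \<and>
         (\<forall>l::complex. l \<in> point_spectrum x0 x1 g w q \<longleftrightarrow> xi x0 x1 g w q l = 0)"
proof -
  obtain g' where "\<forall>x\<in>{x0..x1}. (g has_real_derivative g' x) (at x within {x0..x1})"
    using assms(3) by blast
  then have g: "continuous_on {x0..x1} g"
    unfolding continuous_on_eq_continuous_within using DERIV_continuous by blast
  obtain B where B: "AE x in Iv x0 x1. \<bar>q x\<bar> \<le> B" using assms(8) by blast
  have q: "integrable (Iv x0 x1) q"
  proof (rule Bochner_Integration.integrable_bound)
    show "integrable (Iv x0 x1) (\<lambda>_. B)"
      by (rule finite_measure.integrable_const[OF finite_measure_lebesgue_on]) simp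
    show "AE x in Iv x0 x1. norm (q x) \<le> norm B"
      using B by (rule eventually_mono) simp
  qed (rule assms(7))
  interpret transport_operator x0 x1 g w q
    using assms(2,4,5) g q by unfold_locales auto
  have "spectrum_L x0 x1 g w q = point_spectrum x0 x1 g w q"
    unfolding spectrum_L_def using resolvent_set_iff point_spectrum_iff by auto
  then show ?thesis using point_spectrum_iff by blast
qed

end
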